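(* Let $X$ and $Y$ be Banach spaces, let $p\geq 1$ with conjugate exponent $p^*$ (so $\frac1p+\frac1{p^*}=1$, with $p^*=\infty$ when $p=1$), and let $u:X\to Y$ be a continuous linear operator. If the adjoint $u^*:Y^*\to X^*$ is almost $p^*$-summing, then for every $(x_i)_{i=1}^\infty\in Rad(X)$ we have $(u(x_i))_{i=1}^\infty\in \ell_p\langle Y\rangle$.
   Context: $r_i$ denote the Rademacher functions on $[0,1]$. For a Banach space $X$: $Rad(X)$ is the space of sequences $(x_i)\subset X$ with $\|(x_i)\|_{Rad(X)}:=\left(\int_0^1\left\|\sum_{i=1}^\infty r_i(t)x_i\right\|^2dt\right)^{1/2}<\infty$ (almost unconditionally summable sequences). For $1\le s\le\infty$, $\ell_s^w(X)$ is the space of sequences with $\|(x_i)\|_{w,s}:=\sup_{x^*\in B_{X^*}}\|(x^*(x_i))_i\|_{s}<\infty$. For $1\le p\le\infty$, $\ell_p\langle X\rangle$ is the space of sequences $(x_i)\subset X$ with $\sup\{\sum_i|x_i^*(x_i)| : (x_i^* )\in B_{\ell_{p^*}^w(X^* )}\}<\infty$ (Cohen strongly $p$-summable sequences). An operator $v\in\mathcal L(X,Y)$ is almost $s$-summing if there is $C\ge0$ with $\left(\int_0^1\left\|\sum_{i=1}^m r_i(t)v(x_i)\right\|^2dt\right)^{1/2}\le C\|(x_i)_{i=1}^m\|_{w,s}$ for all $m\in\mathbb N$ and $x_1,\dots,x_m\in X$. *)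

theory Defs
  imports "HOL-Analysis.Analysis"
begin

text \<open>Rademacher functions: r_n(t) = sign(sin(2^n pi t)) on [0,1]; used for n >= 1.\<close>
definition rademacher :: "nat \<Rightarrow> real \<Rightarrow> real" where
  "rademacher n t = sgn (sin (2 ^ n * pi * t))"

definition lp_norm :: "ennreal \<Rightarrow> (nat \<Rightarrow> real) \<Rightarrow> ennreal" where
  "lp_norm s a =
     (if s = top then (SUP i. ennreal \<bar>a i\<bar>)
      else (let S = (\<Sum>i. ennreal (\<bar>a i\<bar> powr enn2real s))
            in if S = top then top else ennreal (enn2real S powr (1 / enn2real s))))"

definition weak_norm :: "ennreal \<Rightarrow> (nat \<Rightarrow> 'a::real_normed_vector) \<Rightarrow> ennreal" where
  "weak_norm s x = (SUP f \<in> {f :: 'a \<Rightarrow>\<^sub>L real. norm f \<le> 1}. lp_norm s (\<lambda>i. blinfun_apply f (x i)))"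

definition conj_exp :: "real \<Rightarrow> ennreal" where
  "conj_exp p = (if p = 1 then top else ennreal (p / (p - 1)))"

text \<open>Rad(X): the Rademacher series sum_{i>=1} r_i(t) x_i (sequence x indexed from 0,
  x i paired with r_(i+1)) converges for almost every t in [0,1] and
  int_0^1 ||sum r_i(t) x_i||^2 dt < infinity.\<close>
definition in_Rad :: "(nat \<Rightarrow> 'a::banach) \<Rightarrow> bool" where
  "in_Rad x \<longleftrightarrow>
     (AE t in lborel. t \<in> {0..1} \<longrightarrow> summable (\<lambda>i. rademacher (Suc i) t *\<^sub>R x i)) \<and>
     (\<integral>\<^sup>+ t. indicator {0..1::real} t *
        ennreal ((norm (\<Sum>i. rademacher (Suc i) t *\<^sub>R x i))\<^sup>2) \<partial>lborel) < top"

definition cohen_strongly :: "real \<Rightarrow> (nat \<Rightarrow> 'a::real_normed_vector) \<Rightarrow> bool" where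
  "cohen_strongly p y \<longleftrightarrow>
     (SUP ys \<in> {ys :: nat \<Rightarrow> ('a \<Rightarrow>\<^sub>L real). weak_norm (conj_exp p) ys \<le> 1}.
        (\<Sum>i. ennreal \<bar>blinfun_apply (ys i) (y i)\<bar>)) < top"

definition almost_summing :: "ennreal \<Rightarrow> ('a::real_normed_vector \<Rightarrow>\<^sub>L 'b::real_normed_vector) \<Rightarrow> bool" where
  "almost_summing s v \<longleftrightarrow>
     (\<exists>C\<ge>0. \<forall>(m::nat) (x::nat \<Rightarrow> 'a).
        ennreal (sqrt (LINT t:{0..1}|lborel.
            (norm (\<Sum>i<m. rademacher (Suc i) t *\<^sub>R blinfun_apply v (x i)))\<^sup>2))
        \<le> ennreal C * weak_norm s (\<lambda>i. if i < m then x i else 0))"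

definition op_adjoint :: "('a::real_normed_vector \<Rightarrow>\<^sub>L 'b::real_normed_vector) \<Rightarrow> (('b \<Rightarrow>\<^sub>L real) \<Rightarrow>\<^sub>L ('a \<Rightarrow>\<^sub>L real))" where
  "op_adjoint u = Blinfun (\<lambda>f. f o\<^sub>L u)"

end

theory Submission
  imports Defs
begin

text \<open>Fix y* in the unit ball of the weak sequence space of Y* and choose signs so that
  |y*_i(u x_i)| = g_i(x_i) with g_i = u*(+-y*_i). Writing S(t) = sum_j r_(j+1)(t) x_j, the
  orthogonality of the Rademacher functions recovers g_i(x_i) as the integral of
  r_(i+1)(t) g_i(S(t)) over [0,1]. Hence sum_(i<n) |y*_i(u x_i)| is the integral of
  (sum_(i<n) r_(i+1)(t) g_i)(S(t)), which by ab <= a^2 + b^2 is at most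
  int ||sum_(i<n) r_(i+1) g_i||^2 + int ||S||^2. The almost summing constant C of u* bounds
  the first integral by C^2 and x \<in> Rad(X) makes the second finite, uniformly in n and y*.\<close>

lemma borel_measurable_rademacher [measurable]: "rademacher n \<in> borel_measurable borel"
  unfolding rademacher_def by measurable

lemma abs_rademacher_le_1: "\<bar>rademacher n t\<bar> \<le> 1"
  unfolding rademacher_def by (simp add: sgn_real_def)

lemma rademacher_shift:
  assumes "m \<le> n"
  shows "rademacher n (t + 1 / 2 ^ m) = (if n = m then - rademacher n t else rademacher n t)"
proof -
  have arg: "2 ^ n * pi * (t + 1 / 2 ^ m) = 2 ^ n * pi * t + 2 ^ (n - m) * pi"
    using assms by (simp add: power_diff field_simps)
  show ?thesis
  proof (cases "n = m")
    case True
    then show ?thesis unfolding rademacher_def arg by (simp add: sgn_minus)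
  next
    case False
    then obtain k where k: "n - m = Suc k" using assms by (cases "n - m") auto
    have "sin (s + 2 * pi * of_int j) = sin s" for s and j :: int
      by (simp only: sin_add cos_int_2pin sin_int_2pin)
    from this[of "2 ^ n * pi * t" "2 ^ k"]
    have "sin (2 ^ n * pi * t + 2 ^ (n - m) * pi) = sin (2 ^ n * pi * t)"
      by (simp add: k mult_ac)
    then show ?thesis unfolding rademacher_def arg using False by simp
  qed
qed

lemma rademacher_periodic: "1 \<le> n \<Longrightarrow> rademacher n (t + 1) = rademacher n t"
  using rademacher_shift[of 0 n t] by simp

lemma set_integrable_bounded_unit_interval:
  fixes f :: "real \<Rightarrow> real"
  assumes "f \<in> borel_measurable borel" and "\<And>t. \<bar>f t\<bar> \<le> B"
  shows "set_integrable lborel {0..1} f"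
  unfolding set_integrable_def
  by (rule integrableI_bounded_set_indicator[where B=B]) (use assms in auto)

lemma set_integral_sum:
  fixes f :: "'i \<Rightarrow> 'a \<Rightarrow> 'b::{banach, second_countable_topology}"
  assumes "\<And>i. i \<in> I \<Longrightarrow> set_integrable M A (f i)"
  shows "set_integrable M A (\<lambda>x. \<Sum>i\<in>I. f i x)"
    and "(LINT x:A|M. (\<Sum>i\<in>I. f i x)) = (\<Sum>i\<in>I. LINT x:A|M. f i x)"
  using assms unfolding set_integrable_def set_lebesgue_integral_def
  by (simp_all add: scaleR_sum_right integral_sum)

lemma set_integral_periodic_antiperiodic_eq_0:
  fixes \<phi> :: "real \<Rightarrow> real"
  assumes per: "\<And>t. \<phi> (t + 1) = \<phi> t" and anti: "\<And>t. \<phi> (t + d) = - \<phi> t"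
    and d: "0 \<le> d" "d \<le> 1"
    and int: "set_integrable lborel {0..1} \<phi>"
  shows "(LINT t:{0..1}|lborel. \<phi> t) = 0"
proof -
  have i01: "\<phi> integrable_on {0..1}" and eq: "(LINT t:{0..1}|lborel. \<phi> t) = integral {0..1} \<phi>"
    using set_borel_integral_eq_integral[OF int] by auto
  have "(\<lambda>x. \<phi> (x + 1)) integrable_on {1-1..2-1}" using i01 per by simp
  then have i12: "\<phi> integrable_on {1..2}" using integrable_shift_real_ivl_iff by blast
  have i02: "\<phi> integrable_on {0..2}"
    by (rule Henstock_Kurzweil_Integration.integrable_combine[OF _ _ i01 i12]) auto
  have id1: "\<phi> integrable_on {d..1+d}" by (rule integrable_subinterval_real[OF i02]) (use d in auto)
  have "integral {0..1} (\<lambda>x. \<phi> (x + d)) = integral {d..1+d} \<phi>"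
    using integral_shift_real_ivl[where f=\<phi> and a=d and b="1+d" and c=d] by simp
  also have "\<dots> = integral {d..1} \<phi> + integral {1..1+d} \<phi>"
    by (rule Henstock_Kurzweil_Integration.integral_combine[symmetric]) (use d id1 in auto)
  also have "integral {1..1+d} \<phi> = integral {0..d} \<phi>"
    using integral_shift_real_ivl[where f=\<phi> and a=1 and b="1+d" and c=1] per by simp
  also have "integral {d..1} \<phi> + integral {0..d} \<phi> = integral {0..1} \<phi>"
    using Henstock_Kurzweil_Integration.integral_combine[of 0 d 1 \<phi>] d i01 by simp
  finally have "integral {0..1} (\<lambda>x. \<phi> (x + d)) = integral {0..1} \<phi>" .
  moreover have "integral {0..1} (\<lambda>x. \<phi> (x + d)) = - integral {0..1} \<phi>"
    by (simp add: anti)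
  ultimately show ?thesis using eq by simp
qed

lemma set_integrable_rademacher_mult:
  fixes \<phi> :: "real \<Rightarrow> real"
  assumes [measurable]: "\<phi> \<in> borel_measurable borel" and int: "set_integrable lborel A \<phi>"
    and [measurable]: "A \<in> sets borel"
  shows "set_integrable lborel A (\<lambda>t. rademacher n t * \<phi> t)"
proof (rule set_integrable_bound[OF int])
  show "set_borel_measurable lborel A (\<lambda>t. rademacher n t * \<phi> t)"
    unfolding set_borel_measurable_def by measurable
  show "AE t in lborel. t \<in> A \<longrightarrow> norm (rademacher n t * \<phi> t) \<le> norm (\<phi> t)"
    using abs_rademacher_le_1[of n] by (auto simp: abs_mult intro!: mult_left_le_one_le)
qed

lemma set_integral_rademacher_mult_eq_0:
  fixes \<phi> :: "real \<Rightarrow> real"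
  assumes n: "1 \<le> n" and [measurable]: "\<phi> \<in> borel_measurable borel"
    and int: "set_integrable lborel {0..1} \<phi>"
    and per: "\<And>t. \<phi> (t + 1) = \<phi> t" and inv: "\<And>t. \<phi> (t + 1 / 2 ^ n) = \<phi> t"
  shows "(LINT t:{0..1}|lborel. rademacher n t * \<phi> t) = 0"
proof (rule set_integral_periodic_antiperiodic_eq_0[where d = "1 / 2 ^ n"])
  show "set_integrable lborel {0..1} (\<lambda>t. rademacher n t * \<phi> t)"
    by (rule set_integrable_rademacher_mult[OF _ int]) auto
qed (use n per inv rademacher_periodic rademacher_shift[of n n] in auto)

lemma rademacher_orthogonal:
  assumes "1 \<le> n" "n < m"
  shows "(LINT t:{0..1}|lborel. rademacher n t * rademacher m t) = 0"
  using assms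
  by (intro set_integral_rademacher_mult_eq_0 set_integrable_bounded_unit_interval[where B=1])
     (auto simp: rademacher_shift rademacher_periodic abs_rademacher_le_1)

lemma set_integral_rademacher_square: "(LINT t:{0..1}|lborel. rademacher n t * rademacher n t) = 1"
proof -
  have "{t. sin (2 ^ n * pi * t) = 0} \<subseteq> range (\<lambda>i::int. of_int i / 2 ^ n :: real)"
  proof
    fix t assume "t \<in> {t. sin (2 ^ n * pi * t) = 0}"
    then obtain i :: int where "2 ^ n * pi * t = of_int i * pi" by (auto simp: sin_zero_iff_int2)
    then have "t = of_int i / 2 ^ n" by (simp add: field_simps)
    then show "t \<in> range (\<lambda>i::int. of_int i / 2 ^ n :: real)" by blast
  qed
  then have "countable {t. sin (2 ^ n * pi * t) = 0}" by (rule countable_subset) simp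
  then have "AE t in lborel. sin (2 ^ n * pi * t) \<noteq> 0"
    using AE_not_in countable_imp_null_set_lborel by fastforce
  then have "AE t \<in> {0..1} in lborel. rademacher n t * rademacher n t = 1"
    by eventually_elim (auto simp: rademacher_def sgn_real_def)
  then have "(LINT t:{0..1}|lborel. rademacher n t * rademacher n t) = (LINT t:{0..1::real}|lborel. 1)"
    by (intro set_lebesgue_integral_cong_AE) auto
  also have "\<dots> = 1" by (subst set_integral_const) auto
  finally show ?thesis .
qed

definition rademacher_series :: "(nat \<Rightarrow> 'a::real_normed_vector) \<Rightarrow> real \<Rightarrow> 'a" where
  "rademacher_series x t = (\<Sum>i. rademacher (Suc i) t *\<^sub>R x i)"

lemma borel_measurable_rademacher_series [measurable]:
  fixes x :: "nat \<Rightarrow> 'a::{banach, second_countable_topology}"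
  shows "rademacher_series x \<in> borel_measurable borel"
  unfolding rademacher_series_def[abs_def] by measurable

text \<open>The tail of the series beyond index i is invariant under the shift by 2^-(i+1), which
  flips the sign of r_(i+1), so it integrates to 0 against r_(i+1); the head is handled by
  orthogonality.\<close>
lemma set_integral_rademacher_mult_series:
  fixes a :: "nat \<Rightarrow> real"
  assumes summable: "AE t in lborel. t \<in> {0..1} \<longrightarrow> summable (\<lambda>j. rademacher (Suc j) t *\<^sub>R a j)"
    and int: "set_integrable lborel {0..1} (rademacher_series a)"
  shows "(LINT t:{0..1}|lborel. rademacher (Suc i) t * rademacher_series a t) = a i"
proof -
  define P where "P t = (\<Sum>j<Suc i. rademacher (Suc j) t * a j)" for t
  define Q where "Q t = (\<Sum>j. rademacher (Suc (j + Suc i)) t * a (j + Suc i))" for t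
  have [measurable]: "P \<in> borel_measurable borel" "Q \<in> borel_measurable borel"
    unfolding P_def Q_def by measurable
  have head_tail: "AE t \<in> {0..1} in lborel. rademacher_series a t = P t + Q t"
    using summable
  proof eventually_elim
    case (elim t)
    then show ?case
      using suminf_split_initial_segment[of "\<lambda>j. rademacher (Suc j) t * a j" "Suc i"]
      by (simp add: rademacher_series_def P_def Q_def)
  qed
  have intR: "set_integrable lborel {0..1} (\<lambda>t. rademacher j t * c)" for j c
    by (intro set_integrable_rademacher_mult set_integrable_bounded_unit_interval[where B="\<bar>c\<bar>"]) auto
  have intP: "set_integrable lborel {0..1} P"
    unfolding P_def by (intro set_integral_sum intR)
  have "set_integrable lborel {0..1} (\<lambda>t. rademacher_series a t - P t)"
    using int intP by (rule set_integral_diff)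
  moreover have "AE t \<in> {0..1} in lborel. rademacher_series a t - P t = Q t"
    using head_tail by eventually_elim simp
  ultimately have intQ: "set_integrable lborel {0..1} Q"
    by (subst (asm) set_integrable_cong_AE[where g = Q]) auto
  have head: "(LINT t:{0..1}|lborel. rademacher (Suc i) t * P t) = a i"
  proof -
    have intRR: "set_integrable lborel {0..1} (\<lambda>t. rademacher j t * rademacher k t)" for j k
      by (rule set_integrable_bounded_unit_interval[where B=1])
         (auto simp: abs_mult intro: mult_le_one abs_rademacher_le_1)
    have "(LINT t:{0..1}|lborel. rademacher (Suc i) t * P t)
        = (LINT t:{0..1}|lborel. (\<Sum>j<Suc i. a j * (rademacher (Suc j) t * rademacher (Suc i) t)))"
      unfolding P_def sum_distrib_left by (simp only: mult_ac)
    also have "\<dots> = (\<Sum>j<Suc i. a j * (LINT t:{0..1}|lborel. rademacher (Suc j) t * rademacher (Suc i) t))"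
      by (subst set_integral_sum(2)) (auto intro: intRR)
    also have "\<dots> = a i"
      by (simp add: rademacher_orthogonal set_integral_rademacher_square)
    finally show ?thesis .
  qed
  have tail: "(LINT t:{0..1}|lborel. rademacher (Suc i) t * Q t) = 0"
  proof (rule set_integral_rademacher_mult_eq_0[OF _ _ intQ])
    show "Q (t + 1 / 2 ^ Suc i) = Q t" for t
      unfolding Q_def using rademacher_shift[of "Suc i" "Suc (_ + Suc i)" t] by simp
  qed (simp_all add: Q_def rademacher_periodic)
  have "(LINT t:{0..1}|lborel. rademacher (Suc i) t * rademacher_series a t)
      = (LINT t:{0..1}|lborel. rademacher (Suc i) t * P t + rademacher (Suc i) t * Q t)"
    using head_tail by (intro set_lebesgue_integral_cong_AE) (auto simp: distrib_left)
  also have "\<dots> = a i"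
    using head tail intP intQ by (simp add: set_integrable_rademacher_mult)
  finally show ?thesis .
qed

lemma lp_norm_mono:
  assumes le: "\<And>i. \<bar>a i\<bar> \<le> \<bar>b i\<bar>"
  shows "lp_norm s a \<le> lp_norm s b"
proof (cases "s = top")
  case True
  then show ?thesis unfolding lp_norm_def
    by (auto intro!: SUP_mono ennreal_leI le)
next
  case False
  define q where "q = enn2real s"
  define Sa where "Sa = (\<Sum>i. ennreal (\<bar>a i\<bar> powr q))"
  define Sb where "Sb = (\<Sum>i. ennreal (\<bar>b i\<bar> powr q))"
  have "0 \<le> q" unfolding q_def by simp
  have "Sa \<le> Sb" unfolding Sa_def Sb_def
    by (intro suminf_le ennreal_leI powr_mono2 \<open>0 \<le> q\<close> le) auto
  show ?thesis
  proof (cases "Sb = top")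
    case True
    then show ?thesis
      using False unfolding lp_norm_def Let_def Sb_def[symmetric] Sa_def[symmetric] q_def[symmetric]
      by simp
  next
    case Sb: False
    then have "Sa \<noteq> top" using \<open>Sa \<le> Sb\<close> by (auto simp: top_unique)
    moreover have "enn2real Sa powr (1 / q) \<le> enn2real Sb powr (1 / q)"
      using \<open>Sa \<le> Sb\<close> Sb \<open>0 \<le> q\<close> by (intro powr_mono2 enn2real_mono) (auto simp: top.not_eq_extremum)
    ultimately show ?thesis
      using False Sb unfolding lp_norm_def Let_def Sb_def[symmetric] Sa_def[symmetric] q_def[symmetric]
      by (simp add: ennreal_leI)
  qed
qed

lemma weak_norm_mono:
  fixes x y :: "nat \<Rightarrow> 'a::real_normed_vector"
  assumes "\<And>i. \<exists>c. \<bar>c\<bar> \<le> 1 \<and> x i = c *\<^sub>R y i"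
  shows "weak_norm s x \<le> weak_norm s y"
  unfolding weak_norm_def
proof (rule SUP_mono)
  fix f :: "'a \<Rightarrow>\<^sub>L real" assume f: "f \<in> {f. norm f \<le> 1}"
  have "lp_norm s (\<lambda>i. f (x i)) \<le> lp_norm s (\<lambda>i. f (y i))"
  proof (rule lp_norm_mono)
    fix i
    obtain c where c: "\<bar>c\<bar> \<le> 1" "x i = c *\<^sub>R y i" using assms by blast
    then have "\<bar>f (x i)\<bar> = \<bar>c\<bar> * \<bar>f (y i)\<bar>"
      by (simp add: blinfun.scaleR_right abs_mult)
    also have "\<dots> \<le> \<bar>f (y i)\<bar>" using c by (simp add: mult_left_le_one_le)
    finally show "\<bar>f (x i)\<bar> \<le> \<bar>f (y i)\<bar>" .
  qed
  then show "\<exists>m\<in>{f. norm f \<le> 1}. lp_norm s (\<lambda>i. f (x i)) \<le> lp_norm s (\<lambda>i. blinfun_apply m (y i))"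
    using f by blast
qed

text \<open>No measurability of s is assumed, since below s is the norm of a Rademacher series in a
  possibly non-separable space; hence the detour through the measurable function \<phi>.
  The crude bound G s <= G^2 + s^2 replaces Cauchy-Schwarz: only finiteness matters.\<close>
lemma nn_integral_abs_le_squares:
  fixes F G s :: "'a \<Rightarrow> real"
  assumes [measurable]: "A \<in> sets M" "F \<in> borel_measurable M" "G \<in> borel_measurable M"
    and bound: "AE t in M. t \<in> A \<longrightarrow> \<bar>F t\<bar> \<le> G t * s t"
  shows "(\<integral>\<^sup>+t. indicator A t * ennreal \<bar>F t\<bar> \<partial>M)
     \<le> (\<integral>\<^sup>+t. indicator A t * ennreal ((G t)\<^sup>2) \<partial>M) + (\<integral>\<^sup>+t. indicator A t * ennreal ((s t)\<^sup>2) \<partial>M)"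
proof -
  define \<phi> where "\<phi> t = max 0 (\<bar>F t\<bar> - (G t)\<^sup>2)" for t
  have [measurable]: "\<phi> \<in> borel_measurable M" unfolding \<phi>_def by measurable
  have "(\<integral>\<^sup>+t. indicator A t * ennreal \<bar>F t\<bar> \<partial>M)
      \<le> (\<integral>\<^sup>+t. indicator A t * ennreal ((G t)\<^sup>2) + indicator A t * ennreal (\<phi> t) \<partial>M)"
  proof (rule nn_integral_mono)
    fix t
    have "ennreal \<bar>F t\<bar> \<le> ennreal ((G t)\<^sup>2 + \<phi> t)"
      unfolding \<phi>_def by (intro ennreal_leI) auto
    also have "\<dots> = ennreal ((G t)\<^sup>2) + ennreal (\<phi> t)"
      unfolding \<phi>_def by (intro ennreal_plus) auto
    finally have "ennreal \<bar>F t\<bar> \<le> ennreal ((G t)\<^sup>2) + ennreal (\<phi> t)" .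
    then show "indicator A t * ennreal \<bar>F t\<bar> \<le> indicator A t * ennreal ((G t)\<^sup>2) + indicator A t * ennreal (\<phi> t)"
      by (auto split: split_indicator)
  qed
  also have "\<dots> = (\<integral>\<^sup>+t. indicator A t * ennreal ((G t)\<^sup>2) \<partial>M) + (\<integral>\<^sup>+t. indicator A t * ennreal (\<phi> t) \<partial>M)"
    by (rule nn_integral_add) auto
  also have "(\<integral>\<^sup>+t. indicator A t * ennreal (\<phi> t) \<partial>M) \<le> (\<integral>\<^sup>+t. indicator A t * ennreal ((s t)\<^sup>2) \<partial>M)"
  proof (rule nn_integral_mono_AE)
    show "AE t in M. indicator A t * ennreal (\<phi> t) \<le> indicator A t * ennreal ((s t)\<^sup>2)"
      using bound
    proof eventually_elim
      case (elim t)
      have "2 * (G t * s t) \<le> (G t)\<^sup>2 + (s t)\<^sup>2"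
        using zero_le_power2[of "G t - s t"] by (simp add: power2_diff)
      then have "G t * s t \<le> (G t)\<^sup>2 + (s t)\<^sup>2"
        using zero_le_power2[of "G t"] zero_le_power2[of "s t"] by linarith
      then have "t \<in> A \<Longrightarrow> \<phi> t \<le> (s t)\<^sup>2"
        using elim unfolding \<phi>_def by auto
      then show ?case by (auto intro: ennreal_leI split: split_indicator)
    qed
  qed
  finally show ?thesis by (simp add: add_left_mono)
qed

lemma set_integrable_dominated_by_square_integrable:
  fixes h s :: "'a \<Rightarrow> real"
  assumes [measurable]: "A \<in> sets M" "h \<in> borel_measurable M" and "emeasure M A < \<infinity>"
    and fin: "(\<integral>\<^sup>+t. indicator A t * ennreal ((s t)\<^sup>2) \<partial>M) < \<infinity>"
    and bound: "AE t in M. t \<in> A \<longrightarrow> \<bar>h t\<bar> \<le> c * s t"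
  shows "set_integrable M A h"
  unfolding set_integrable_def
proof (rule integrableI_bounded)
  have "(\<integral>\<^sup>+t. ennreal (norm (indicator A t *\<^sub>R h t)) \<partial>M) = (\<integral>\<^sup>+t. indicator A t * ennreal \<bar>h t\<bar> \<partial>M)"
    by (intro nn_integral_cong) (auto split: split_indicator)
  also have "\<dots> \<le> (\<integral>\<^sup>+t. indicator A t * ennreal (c\<^sup>2) \<partial>M) + (\<integral>\<^sup>+t. indicator A t * ennreal ((s t)\<^sup>2) \<partial>M)"
    by (rule nn_integral_abs_le_squares[OF _ _ _ bound]) auto
  also have "(\<integral>\<^sup>+t. indicator A t * ennreal (c\<^sup>2) \<partial>M) = ennreal (c\<^sup>2) * emeasure M A"
    by (subst mult.commute) (simp add: nn_integral_cmult_indicator)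
  also have "ennreal (c\<^sup>2) * emeasure M A + (\<integral>\<^sup>+t. indicator A t * ennreal ((s t)\<^sup>2) \<partial>M) < \<infinity>"
    using fin \<open>emeasure M A < \<infinity>\<close> by (simp add: ennreal_mult_less_top)
  finally show "(\<integral>\<^sup>+t. ennreal (norm (indicator A t *\<^sub>R h t)) \<partial>M) < \<infinity>" .
qed simp

lemma blinfun_rademacher_series:
  fixes f :: "'a::real_normed_vector \<Rightarrow>\<^sub>L 'b::real_normed_vector"
  assumes "summable (\<lambda>i. rademacher (Suc i) t *\<^sub>R x i)"
  shows "summable (\<lambda>i. rademacher (Suc i) t *\<^sub>R f (x i))"
    and "f (rademacher_series x t) = rademacher_series (\<lambda>i. f (x i)) t"
  using bounded_linear.summable[OF blinfun.bounded_linear_right assms, of f]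
    bounded_linear.suminf[OF blinfun.bounded_linear_right assms, of f]
  by (simp_all add: rademacher_series_def blinfun.scaleR_right)

lemma set_integrable_rademacher_series_blinfun:
  fixes f :: "'a::banach \<Rightarrow>\<^sub>L real"
  assumes "in_Rad x"
  shows "set_integrable lborel {0..1} (rademacher_series (\<lambda>i. f (x i)))"
proof (rule set_integrable_dominated_by_square_integrable
    [where s = "\<lambda>t. norm (rademacher_series x t)" and c = "norm f"])
  show "(\<integral>\<^sup>+t. indicator {0..1} t * ennreal ((norm (rademacher_series x t))\<^sup>2) \<partial>lborel) < \<infinity>"
    using assms unfolding in_Rad_def rademacher_series_def by simp
  have "AE t in lborel. t \<in> {0..1} \<longrightarrow> summable (\<lambda>i. rademacher (Suc i) t *\<^sub>R x i)"
    using assms unfolding in_Rad_def by simp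
  then show "AE t in lborel. t \<in> {0..1} \<longrightarrow>
      \<bar>rademacher_series (\<lambda>i. f (x i)) t\<bar> \<le> norm f * norm (rademacher_series x t)"
    by eventually_elim (metis blinfun_rademacher_series(2) norm_blinfun real_norm_def)
qed auto

lemma set_integral_rademacher_mult_series_blinfun:
  fixes f :: "'a::banach \<Rightarrow>\<^sub>L real"
  assumes "in_Rad x"
  shows "(LINT t:{0..1}|lborel. rademacher (Suc i) t * rademacher_series (\<lambda>j. f (x j)) t) = f (x i)"
proof (rule set_integral_rademacher_mult_series)
  show "AE t in lborel. t \<in> {0..1} \<longrightarrow> summable (\<lambda>j. rademacher (Suc j) t *\<^sub>R f (x j))"
    using assms unfolding in_Rad_def
    by (auto elim!: eventually_mono dest: blinfun_rademacher_series(1)[where f = f])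
qed (rule set_integrable_rademacher_series_blinfun[OF assms])

text \<open>The coefficients may lie in a non-separable space, so measurability is obtained by
  composing the measurable map t |-> (r_(i+1)(t))_i with a continuous map.\<close>
lemma borel_measurable_norm_rademacher_sum:
  fixes g :: "nat \<Rightarrow> 'a::real_normed_vector"
  shows "(\<lambda>t. norm (\<Sum>i<n. rademacher (Suc i) t *\<^sub>R g i)) \<in> borel_measurable borel"
proof -
  have "(\<lambda>t i. rademacher (Suc i) t) \<in> borel_measurable borel"
    by (rule measurable_coordinatewise_then_product) simp
  moreover have "continuous_on UNIV (\<lambda>v :: nat \<Rightarrow> real. norm (\<Sum>i<n. v i *\<^sub>R g i))"
    by (intro continuous_intros continuous_on_product_coordinates)
  ultimately show ?thesis using borel_measurable_continuous_on by fastforce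
qed

lemma sum_blinfun_le_rademacher:
  fixes x :: "nat \<Rightarrow> 'a::banach" and g :: "nat \<Rightarrow> 'a \<Rightarrow>\<^sub>L real"
  assumes "in_Rad x"
  shows "ennreal (\<Sum>i<n. g i (x i))
    \<le> (\<integral>\<^sup>+t. indicator {0..1} t * ennreal ((norm (\<Sum>i<n. rademacher (Suc i) t *\<^sub>R g i))\<^sup>2) \<partial>lborel)
      + (\<integral>\<^sup>+t. indicator {0..1} t * ennreal ((norm (rademacher_series x t))\<^sup>2) \<partial>lborel)"
    (is "_ \<le> ?bound")
proof -
  define H where "H i = rademacher_series (\<lambda>j. g i (x j))" for i
  define F where "F t = (\<Sum>i<n. rademacher (Suc i) t * H i t)" for t
  have [measurable]: "H i \<in> borel_measurable borel" for i
    unfolding H_def by measurable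
  have intRH: "set_integrable lborel {0..1} (\<lambda>t. rademacher (Suc i) t * H i t)" for i
    unfolding H_def
    by (intro set_integrable_rademacher_mult set_integrable_rademacher_series_blinfun assms) auto
  have intF: "set_integrable lborel {0..1} F"
    unfolding F_def by (rule set_integral_sum(1)) (rule intRH)
  have "(\<Sum>i<n. g i (x i)) = (\<Sum>i<n. LINT t:{0..1}|lborel. rademacher (Suc i) t * H i t)"
    by (simp add: H_def set_integral_rademacher_mult_series_blinfun[OF assms])
  also have "\<dots> = (LINT t:{0..1}|lborel. F t)"
    unfolding F_def by (rule set_integral_sum(2)[symmetric]) (rule intRH)
  finally have "ennreal (\<Sum>i<n. g i (x i)) \<le> ennreal (norm (LINT t:{0..1}|lborel. F t))"
    by (intro ennreal_leI) simp
  also have "\<dots> \<le> (\<integral>\<^sup>+t. norm (indicator {0..1} t *\<^sub>R F t) \<partial>lborel)"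
    unfolding set_lebesgue_integral_def
    by (rule integral_norm_bound_ennreal) (use intF in \<open>simp add: set_integrable_def\<close>)
  also have "\<dots> = (\<integral>\<^sup>+t. indicator {0..1} t * ennreal \<bar>F t\<bar> \<partial>lborel)"
    by (intro nn_integral_cong) (auto split: split_indicator)
  also have "\<dots> \<le> ?bound"
  proof (rule nn_integral_abs_le_squares)
    show "AE t in lborel. t \<in> {0..1} \<longrightarrow>
        \<bar>F t\<bar> \<le> norm (\<Sum>i<n. rademacher (Suc i) t *\<^sub>R g i) * norm (rademacher_series x t)"
      using assms unfolding in_Rad_def
    proof (elim conjE eventually_mono, intro impI)
      fix t assume "t \<in> {0..1} \<longrightarrow> summable (\<lambda>i. rademacher (Suc i) t *\<^sub>R x i)" "t \<in> {0..1}"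
      then have "F t = (\<Sum>i<n. rademacher (Suc i) t *\<^sub>R g i) (rademacher_series x t)"
        unfolding F_def H_def
        by (simp add: blinfun_rademacher_series(2) blinfun.sum_left blinfun.scaleR_left)
      then show "\<bar>F t\<bar> \<le> norm (\<Sum>i<n. rademacher (Suc i) t *\<^sub>R g i) * norm (rademacher_series x t)"
        by (metis norm_blinfun real_norm_def)
    qed
  qed (auto simp: F_def borel_measurable_norm_rademacher_sum)
  finally show ?thesis .
qed

lemma op_adjoint_apply: "op_adjoint u f = f o\<^sub>L u"
  unfolding op_adjoint_def
  by (subst bounded_linear_Blinfun_apply)
     (auto intro: bounded_bilinear.bounded_linear_left[OF bounded_bilinear_blinfun_compose])

lemma nn_integral_square_le_if_sqrt_set_integral_le:
  fixes G :: "real \<Rightarrow> real"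
  assumes [measurable]: "G \<in> borel_measurable borel" and bounded: "\<And>t. \<bar>G t\<bar> \<le> B"
    and le: "sqrt (LINT t:{0..1}|lborel. (G t)\<^sup>2) \<le> C"
  shows "(\<integral>\<^sup>+t. indicator {0..1} t * ennreal ((G t)\<^sup>2) \<partial>lborel) \<le> ennreal (C\<^sup>2)"
proof -
  have "\<bar>(G t)\<^sup>2\<bar> \<le> B\<^sup>2" for t
    using power_mono[OF bounded[of t] abs_ge_zero, of 2] by simp
  then have "set_integrable lborel {0..1} (\<lambda>t. (G t)\<^sup>2)"
    by (intro set_integrable_bounded_unit_interval) auto
  then have "(\<integral>\<^sup>+t. indicator {0..1} t * ennreal ((G t)\<^sup>2) \<partial>lborel)
      = ennreal (LINT t:{0..1}|lborel. (G t)\<^sup>2)"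
    unfolding set_lebesgue_integral_def set_integrable_def
    by (subst nn_integral_eq_integral[symmetric]) (auto intro!: nn_integral_cong split: split_indicator)
  also have "\<dots> \<le> ennreal (C\<^sup>2)"
    using sqrt_le_D[OF le] by (rule ennreal_leI)
  finally show ?thesis .
qed

lemma sum_abs_le_if_adjoint_bound:
  fixes u :: "'a::banach \<Rightarrow>\<^sub>L 'b::banach" and ys :: "nat \<Rightarrow> 'b \<Rightarrow>\<^sub>L real"
  assumes "0 \<le> C"
    and adjoint_bound: "\<forall>m (y :: nat \<Rightarrow> 'b \<Rightarrow>\<^sub>L real).
      ennreal (sqrt (LINT t:{0..1}|lborel. (norm (\<Sum>i<m. rademacher (Suc i) t *\<^sub>R op_adjoint u (y i)))\<^sup>2))
        \<le> ennreal C * weak_norm s (\<lambda>i. if i < m then y i else 0)"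
    and x: "in_Rad x" and ys: "weak_norm s ys \<le> 1"
  shows "(\<Sum>i<n. ennreal \<bar>ys i (u (x i))\<bar>)
    \<le> ennreal (C\<^sup>2) + (\<integral>\<^sup>+t. indicator {0..1} t * ennreal ((norm (rademacher_series x t))\<^sup>2) \<partial>lborel)"
proof -
  define y where "y i = sgn (ys i (u (x i))) *\<^sub>R ys i" for i
  define g where "g i = op_adjoint u (y i)" for i
  define G where "G t = norm (\<Sum>i<n. rademacher (Suc i) t *\<^sub>R g i)" for t
  have "g i (x i) = \<bar>ys i (u (x i))\<bar>" for i
    by (auto simp: g_def y_def op_adjoint_apply blinfun.scaleR_left sgn_real_def)
  then have "(\<Sum>i<n. ennreal \<bar>ys i (u (x i))\<bar>) = ennreal (\<Sum>i<n. g i (x i))"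
    by simp
  also have "\<dots> \<le> (\<integral>\<^sup>+t. indicator {0..1} t * ennreal ((G t)\<^sup>2) \<partial>lborel)
      + (\<integral>\<^sup>+t. indicator {0..1} t * ennreal ((norm (rademacher_series x t))\<^sup>2) \<partial>lborel)"
    unfolding G_def by (rule sum_blinfun_le_rademacher[OF x])
  also have "(\<integral>\<^sup>+t. indicator {0..1} t * ennreal ((G t)\<^sup>2) \<partial>lborel) \<le> ennreal (C\<^sup>2)"
  proof (rule nn_integral_square_le_if_sqrt_set_integral_le)
    show "G \<in> borel_measurable borel"
      unfolding G_def by (rule borel_measurable_norm_rademacher_sum)
    show "\<bar>G t\<bar> \<le> (\<Sum>i<n. norm (g i))" for t
      unfolding G_def using abs_rademacher_le_1
      by (auto intro!: order_trans[OF norm_sum] sum_mono mult_left_le_one_le)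
    have "weak_norm s (\<lambda>i. if i < n then y i else 0) \<le> weak_norm s ys"
    proof (rule weak_norm_mono)
      show "\<exists>c. \<bar>c\<bar> \<le> 1 \<and> (if i < n then y i else 0) = c *\<^sub>R ys i" for i
        by (rule exI[where x = "if i < n then sgn (ys i (u (x i))) else 0"])
           (auto simp: y_def abs_sgn_eq)
    qed
    then have truncated: "weak_norm s (\<lambda>i. if i < n then y i else 0) \<le> 1"
      using ys by (rule order_trans)
    have "ennreal (sqrt (LINT t:{0..1}|lborel. (G t)\<^sup>2))
        \<le> ennreal C * weak_norm s (\<lambda>i. if i < n then y i else 0)"
      using adjoint_bound unfolding G_def g_def by blast
    also have "\<dots> \<le> ennreal C"
      using mult_left_mono[OF truncated, of "ennreal C"] by simp
    finally show "sqrt (LINT t:{0..1}|lborel. (G t)\<^sup>2) \<le> C"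
      using \<open>0 \<le> C\<close> by simp
  qed
  finally show ?thesis by (simp add: add_right_mono)
qed

lemma strongly_summable_if_adjoint_almost_summing:
  fixes u :: "'a::banach \<Rightarrow>\<^sub>L 'b::banach"
  assumes "almost_summing s (op_adjoint u)" and "in_Rad x"
  shows "(SUP ys \<in> {ys :: nat \<Rightarrow> 'b \<Rightarrow>\<^sub>L real. weak_norm s ys \<le> 1}.
      (\<Sum>i. ennreal \<bar>blinfun_apply (ys i) (u (x i))\<bar>)) < top"
proof -
  define N where
    "N = (\<integral>\<^sup>+t. indicator {0..1} t * ennreal ((norm (rademacher_series x t))\<^sup>2) \<partial>lborel)"
  obtain C where "\<And>(ys :: nat \<Rightarrow> 'b \<Rightarrow>\<^sub>L real) n. weak_norm s ys \<le> 1 \<Longrightarrow>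
      (\<Sum>i<n. ennreal \<bar>blinfun_apply (ys i) (u (x i))\<bar>) \<le> ennreal (C\<^sup>2) + N"
    using assms sum_abs_le_if_adjoint_bound unfolding almost_summing_def N_def by blast
  then have "(SUP ys \<in> {ys :: nat \<Rightarrow> 'b \<Rightarrow>\<^sub>L real. weak_norm s ys \<le> 1}.
      (\<Sum>i. ennreal \<bar>blinfun_apply (ys i) (u (x i))\<bar>)) \<le> ennreal (C\<^sup>2) + N"
    unfolding suminf_eq_SUP by (auto intro!: SUP_least)
  also have "\<dots> < top"
    using assms(2) unfolding N_def in_Rad_def rademacher_series_def by simp
  finally show ?thesis .
qed

theorem theorem2p1:
  fixes u :: "'a::banach \<Rightarrow>\<^sub>L 'b::banach" and p :: real
  assumes "p \<ge> 1"
    and "almost_summing (conj_exp p) (op_adjoint u)"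
  shows "\<forall>x :: nat \<Rightarrow> 'a. in_Rad x \<longrightarrow> cohen_strongly p (\<lambda>i. blinfun_apply u (x i))"
  using strongly_summable_if_adjoint_almost_summing[OF assms(2)]
  unfolding cohen_strongly_def by blast

end
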